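(* Let $n \ge 1$. A general cubic form $p \in H_3(\mathbb{C}^n)$ has a unique representation $$p(x_1,\dots,x_n) = \sum_{1 \le i \le j \le n} \bigl(t_{\{i,j\},i}x_i + t_{\{i,j\},i+1}x_{i+1} + \cdots + t_{\{i,j\},j}x_j\bigr)^3,$$ with $t_{\{i,j\},k} \in \mathbb{C}$. Thus for each pair $i \le j$ the linear form cubed involves only the variables $x_i,\dots,x_j$.
   Context: $H_d(\mathbb{C}^n)$ denotes the complex vector space of homogeneous polynomials (forms) of degree $d$ in $x_1,\dots,x_n$. "A general $p$ has property P" means P holds for all $p$ in a nonempty Zariski-open subset of $H_d(\mathbb{C}^n)$. Representations are counted up to permutation of like summands. A summand $f^k$ is identified with $(\zeta f)^k$ whenever $\zeta^k=1$. *)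

theory Defs
  imports Complex_Main "HOL-Library.Multiset"
begin

text \<open>Monomials of degree d in x_0,...,x_{n-1} are multisets of variable indices.
  A form in H_d(C^n) is given by its coefficient vector, a function on monomials
  that vanishes outside the admissible monomials.\<close>

definition monomials :: "nat \<Rightarrow> nat \<Rightarrow> nat multiset set" where
  "monomials d n = {m. size m = d \<and> set_mset m \<subseteq> {..<n}}"

definition forms :: "nat \<Rightarrow> nat \<Rightarrow> (nat multiset \<Rightarrow> complex) set" where
  "forms d n = {c. \<forall>m. m \<notin> monomials d n \<longrightarrow> c m = 0}"

definition eval_form :: "nat \<Rightarrow> nat \<Rightarrow> (nat multiset \<Rightarrow> complex) \<Rightarrow> (nat \<Rightarrow> complex) \<Rightarrow> complex" where
  "eval_form d n c x = (\<Sum>m\<in>monomials d n. c m * (\<Prod>i\<in>#m. x i))"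

inductive poly_fun :: "(('i \<Rightarrow> complex) \<Rightarrow> complex) \<Rightarrow> bool" where
  const: "poly_fun (\<lambda>_. a)"
| var: "poly_fun (\<lambda>c. c i)"
| add: "poly_fun f \<Longrightarrow> poly_fun g \<Longrightarrow> poly_fun (\<lambda>c. f c + g c)"
| mult: "poly_fun f \<Longrightarrow> poly_fun g \<Longrightarrow> poly_fun (\<lambda>c. f c * g c)"

text \<open>A general element of H_d(C^n) has property P: P holds on a nonempty
  Zariski-open subset, i.e. (basic opens suffice) on the non-vanishing locus of a
  polynomial function that does not vanish identically on H_d(C^n).\<close>
definition general_form :: "nat \<Rightarrow> nat \<Rightarrow> ((nat multiset \<Rightarrow> complex) \<Rightarrow> bool) \<Rightarrow> bool" where
  "general_form d n P \<longleftrightarrow> (\<exists>q. poly_fun q \<and> (\<exists>c\<in>forms d n. q c \<noteq> 0) \<and>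
      (\<forall>c\<in>forms d n. q c \<noteq> 0 \<longrightarrow> P c))"

text \<open>The representation (0-indexed variables): summands indexed by pairs i \<le> j < n,
  the (i,j) summand being (\<Sum>k=i..j. t (i,j) k * x_k)^3.\<close>
definition interval_cubic_rep :: "nat \<Rightarrow> (nat multiset \<Rightarrow> complex) \<Rightarrow> (nat \<times> nat \<Rightarrow> nat \<Rightarrow> complex) \<Rightarrow> bool" where
  "interval_cubic_rep n c t \<longleftrightarrow> (\<forall>x. eval_form 3 n c x =
      (\<Sum>(i,j)\<in>{(i,j). i \<le> j \<and> j < n}. (\<Sum>k=i..j. t (i,j) k * x k) ^ 3))"

definition same_rep :: "nat \<Rightarrow> (nat \<times> nat \<Rightarrow> nat \<Rightarrow> complex) \<Rightarrow> (nat \<times> nat \<Rightarrow> nat \<Rightarrow> complex) \<Rightarrow> bool" where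
  "same_rep n t t' \<longleftrightarrow> (\<forall>i j. i \<le> j \<and> j < n \<longrightarrow>
      (\<exists>\<zeta>::complex. \<zeta> ^ 3 = 1 \<and> (\<forall>k\<in>{i..j}. t' (i,j) k = \<zeta> * t (i,j) k)))"

end

theory Submission
  imports Defs "HOL-Library.Product_Lexorder"
begin

(* Call the interval [i,j] (i \<le> j) the owner of the cubic monomials whose
   least variable is x_i and whose largest is x_j: x_i^3 if i = j, and x_i^2 x_j,
   x_i x_j^2, x_i x_k x_j (i < k < j) otherwise.  The summand attached to [i,j] is the only
   one that can contribute to these coefficients among all summands for intervals of at
   least its length.  Hence, processing the intervals by decreasing length, the owned
   coefficients of the current residual determine the cube (a_i x_i + ... + a_j x_j)^3
   up to a cube root of unity, provided the two coefficients of x_i^2 x_j and x_i x_j^2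
   (namely 3 a_i^2 a_j and 3 a_i a_j^2) are nonzero.  Subtracting it and recursing
   ("peeling") yields existence and uniqueness of the representation. *)

section \<open>Extracting coefficients of cubic forms\<close>

definition unit_vec :: "nat \<Rightarrow> nat \<Rightarrow> complex" where
  "unit_vec i k = (if k = i then 1 else 0)"

definition vec2 :: "nat \<Rightarrow> nat \<Rightarrow> complex \<Rightarrow> complex \<Rightarrow> nat \<Rightarrow> complex" where
  "vec2 i j s t l = s * unit_vec i l + t * unit_vec j l"

definition vec3 :: "nat \<Rightarrow> nat \<Rightarrow> nat \<Rightarrow> complex \<Rightarrow> complex \<Rightarrow> complex \<Rightarrow> nat \<Rightarrow> complex" where
  "vec3 i j k s t u l = s * unit_vec i l + t * unit_vec j l + u * unit_vec k l"

text \<open>Finite-difference functionals which, applied to the polynomial function of a cubic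
  form, return the coefficient of x_i^3, x_i^2 x_j and x_i x_j x_k respectively.\<close>

definition coeff_iii :: "nat \<Rightarrow> ((nat \<Rightarrow> complex) \<Rightarrow> complex) \<Rightarrow> complex" where
  "coeff_iii i F = F (unit_vec i)"

definition coeff_iij :: "nat \<Rightarrow> nat \<Rightarrow> ((nat \<Rightarrow> complex) \<Rightarrow> complex) \<Rightarrow> complex" where
  "coeff_iij i j F =
     ((F (vec2 i j 1 1) - F (vec2 i j 1 0) - F (vec2 i j 0 1))
    + (F (vec2 i j (-1) 1) - F (vec2 i j (-1) 0) - F (vec2 i j 0 1))) / 2"

definition coeff_ijk :: "nat \<Rightarrow> nat \<Rightarrow> nat \<Rightarrow> ((nat \<Rightarrow> complex) \<Rightarrow> complex) \<Rightarrow> complex" where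
  "coeff_ijk i j k F =
     F (vec3 i j k 1 1 1) - F (vec3 i j k 1 1 0) - F (vec3 i j k 1 0 1) - F (vec3 i j k 0 1 1)
   + F (vec3 i j k 1 0 0) + F (vec3 i j k 0 1 0) + F (vec3 i j k 0 0 1) - F (vec3 i j k 0 0 0)"

lemma coeff_functionals_linear:
  "coeff_iii i (\<lambda>x. \<Sum>m\<in>S. g m * f m x) = (\<Sum>m\<in>S. g m * coeff_iii i (f m))"
  "coeff_iij i j (\<lambda>x. \<Sum>m\<in>S. g m * f m x) = (\<Sum>m\<in>S. g m * coeff_iij i j (f m))"
  "coeff_ijk i j k (\<lambda>x. \<Sum>m\<in>S. g m * f m x) = (\<Sum>m\<in>S. g m * coeff_ijk i j k (f m))"
  by (simp_all add: coeff_iii_def coeff_iij_def coeff_ijk_def sum_subtractf[symmetric]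
      sum.distrib[symmetric] sum_divide_distrib algebra_simps)

lemma monomial_at_supported:
  fixes v :: "'a \<Rightarrow> 'b :: semidom"
  assumes "finite A" and "\<And>l. l \<notin> A \<Longrightarrow> v l = 0"
  shows "(\<Prod>l\<in>#m. v l) = (if set_mset m \<subseteq> A then \<Prod>a\<in>A. v a ^ count m a else 0)"
proof (cases "set_mset m \<subseteq> A")
  case True
  have "(\<Prod>l\<in>#m. v l) = (\<Prod>a\<in>set_mset m. v a ^ count m a)"
    by (rule image_prod_mset_multiplicity)
  also have "\<dots> = (\<Prod>a\<in>A. v a ^ count m a)"
    using True assms(1) by (intro prod.mono_neutral_left) (auto simp: not_in_iff)
  finally show ?thesis using True by simp
next
  case False
  then obtain l where l: "l \<in># m" "l \<notin> A" by blast
  then have "0 \<in># image_mset v m"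
    using assms(2) by (metis image_mset_add_mset insert_DiffM union_single_eq_member)
  then show ?thesis using False by simp
qed

lemma size_on_support: "finite A \<Longrightarrow> set_mset m \<subseteq> A \<Longrightarrow> size m = (\<Sum>a\<in>A. count m a)"
  unfolding size_multiset_overloaded_eq by (rule sum.mono_neutral_left) (auto simp: not_in_iff)

lemma mset_eq_on_support:
  "set_mset m \<subseteq> A \<Longrightarrow> set_mset m' \<subseteq> A \<Longrightarrow> m = m' \<longleftrightarrow> (\<forall>a\<in>A. count m a = count m' a)"
  unfolding multiset_eq_iff by (metis count_eq_zero_iff subsetD)

text \<open>The finite differences evaluated on a monomial s^p t^q (resp. s^p t^q u^r) of degree 3.\<close>

lemma finite_difference_2:
  fixes p q :: nat
  assumes "p + q = 3"
  shows "((1 - 0 ^ q - 0 ^ p) + ((-1) ^ p - (-1) ^ p * 0 ^ q - 0 ^ p)) / 2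
    = (if p = 2 \<and> q = 1 then 1 else (0::complex))"
proof -
  have "p = 0 \<and> q = 3 \<or> p = 1 \<and> q = 2 \<or> p = 2 \<and> q = 1 \<or> p = 3 \<and> q = 0" using assms by linarith
  then show ?thesis by (elim disjE) simp_all
qed

lemma finite_difference_3:
  fixes p q r :: nat
  assumes "p + q + r = 3"
  shows "1 - 0 ^ r - 0 ^ q - 0 ^ p + 0 ^ q * 0 ^ r + 0 ^ p * 0 ^ r + 0 ^ p * 0 ^ q
    - 0 ^ p * 0 ^ q * 0 ^ r = (if p = 1 \<and> q = 1 \<and> r = 1 then 1 else (0::complex))"
proof -
  have "(p = 1 \<and> q = 1 \<and> r = 1) \<longleftrightarrow> (p \<noteq> 0 \<and> q \<noteq> 0 \<and> r \<noteq> 0)" using assms by linarith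
  then show ?thesis by (cases "p = 0"; cases "q = 0"; cases "r = 0") simp_all
qed

lemma coeff_iii_monomial:
  assumes "size m = 3"
  shows "coeff_iii i (\<lambda>x. \<Prod>l\<in>#m. x l) = (if m = {#i,i,i#} then 1 else 0)"
proof -
  have "(\<Prod>l\<in>#m. unit_vec i l) = (if set_mset m \<subseteq> {i} then 1 else 0)"
    by (subst monomial_at_supported[of "{i}"]) (auto simp: unit_vec_def)
  moreover have "set_mset m \<subseteq> {i} \<longleftrightarrow> m = {#i,i,i#}"
    using size_on_support[of "{i}" m] assms by (auto simp: mset_eq_on_support)
  ultimately show ?thesis by (simp add: coeff_iii_def)
qed

lemma coeff_iij_monomial:
  assumes "size m = 3" "i \<noteq> j"
  shows "coeff_iij i j (\<lambda>x. \<Prod>l\<in>#m. x l) = (if m = {#i,i,j#} then 1 else 0)"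
proof -
  have val: "(\<Prod>l\<in>#m. vec2 i j s t l) =
      (if set_mset m \<subseteq> {i,j} then s ^ count m i * t ^ count m j else 0)" for s t
    using assms(2) by (subst monomial_at_supported[of "{i,j}"]) (auto simp: vec2_def unit_vec_def)
  show ?thesis
  proof (cases "set_mset m \<subseteq> {i,j}")
    case True
    let ?p = "count m i" and ?q = "count m j"
    have "?p + ?q = 3" using size_on_support[OF _ True] assms by simp
    note finite_difference_2[OF this]
    moreover have "m = {#i,i,j#} \<longleftrightarrow> ?p = 2 \<and> ?q = 1"
      using True assms(2) by (subst mset_eq_on_support[of _ "{i,j}"]) auto
    ultimately show ?thesis using True by (simp add: coeff_iij_def val)
  next
    case False
    then have "m \<noteq> {#i,i,j#}" by auto
    then show ?thesis using False by (simp add: coeff_iij_def val)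
  qed
qed

lemma coeff_ijk_monomial:
  assumes "size m = 3" "i \<noteq> j" "i \<noteq> k" "j \<noteq> k"
  shows "coeff_ijk i j k (\<lambda>x. \<Prod>l\<in>#m. x l) = (if m = {#i,j,k#} then 1 else 0)"
proof -
  have val: "(\<Prod>l\<in>#m. vec3 i j k s t u l) =
      (if set_mset m \<subseteq> {i,j,k} then s ^ count m i * t ^ count m j * u ^ count m k else 0)"
    for s t u
    using assms(2-4)
    by (subst monomial_at_supported[of "{i,j,k}"]) (auto simp: vec3_def unit_vec_def mult.assoc)
  show ?thesis
  proof (cases "set_mset m \<subseteq> {i,j,k}")
    case True
    let ?p = "count m i" and ?q = "count m j" and ?r = "count m k"
    have "?p + ?q + ?r = 3" using size_on_support[OF _ True] assms by simp
    note finite_difference_3[OF this]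
    moreover have "m = {#i,j,k#} \<longleftrightarrow> ?p = 1 \<and> ?q = 1 \<and> ?r = 1"
      using True assms(2-4) by (subst mset_eq_on_support[of _ "{i,j,k}"]) auto
    ultimately show ?thesis using True by (simp add: coeff_ijk_def val)
  next
    case False
    then have "m \<noteq> {#i,j,k#}" by auto
    then show ?thesis using False by (simp add: coeff_ijk_def val)
  qed
qed

lemma size3_mset_cases:
  assumes "size m = 3"
  obtains a b c where "m = {#a,b,c#}"
proof -
  from assms have "size m = Suc (Suc (Suc 0))" by simp
  then obtain a b c M where "m = add_mset a (add_mset b (add_mset c M))" "size M = 0"
    by (metis size_eq_Suc_imp_eq_union size_add_mset Suc_inject)
  then show ?thesis using that by auto
qed

lemma finite_monomials: "finite (monomials d n)"
proof -
  have "monomials d n = multisets_of_size {..<n} d"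
    unfolding monomials_def multisets_of_size_def by auto
  then show ?thesis by auto
qed

lemma sum_against_delta:
  assumes "c \<in> forms d n" and "\<And>m. m \<in> monomials d n \<Longrightarrow> E m = (if m = m0 then 1 else 0)"
  shows "(\<Sum>m\<in>monomials d n. c m * E m) = c m0"
proof -
  have "(\<Sum>m\<in>monomials d n. c m * E m) = (\<Sum>m\<in>monomials d n. if m = m0 then c m else 0)"
    by (rule sum.cong) (auto simp: assms(2))
  also have "\<dots> = c m0"
    using assms(1) by (auto simp: sum.delta' finite_monomials forms_def)
  finally show ?thesis .
qed

lemma eval_form_fun: "eval_form d n c = (\<lambda>x. \<Sum>m\<in>monomials d n. c m * (\<Prod>i\<in>#m. x i))"
  by (simp add: eval_form_def fun_eq_iff)

lemma coeff_by_duality: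
  assumes c: "c \<in> forms 3 n"
    and lin: "\<And>(S :: nat multiset set) g f.
      L (\<lambda>x. \<Sum>m\<in>S. g m * f m x) = (\<Sum>m\<in>S. g m * L (f m))"
    and dual: "\<And>m. size m = 3 \<Longrightarrow> L (\<lambda>x. \<Prod>l\<in>#m. x l) = (if m = m0 then 1 else 0)"
  shows "L (eval_form 3 n c) = c m0"
proof -
  have "L (eval_form 3 n c) = (\<Sum>m\<in>monomials 3 n. c m * L (\<lambda>x. \<Prod>i\<in>#m. x i))"
    unfolding eval_form_fun using lin[where S = "monomials 3 n" and g = c and f = "\<lambda>m x. \<Prod>i\<in>#m. x i"] by simp
  also have "\<dots> = c m0"
    using dual by (intro sum_against_delta[OF c]) (simp add: monomials_def)
  finally show ?thesis .
qed

lemma coeff_iii_eval_form: "c \<in> forms 3 n \<Longrightarrow> coeff_iii i (eval_form 3 n c) = c {#i,i,i#}"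
  by (rule coeff_by_duality[where L = "coeff_iii i"]) (simp_all add: coeff_functionals_linear coeff_iii_monomial)

lemma coeff_iij_eval_form:
  "c \<in> forms 3 n \<Longrightarrow> i \<noteq> j \<Longrightarrow> coeff_iij i j (eval_form 3 n c) = c {#i,i,j#}"
  by (rule coeff_by_duality[where L = "coeff_iij i j"]) (simp_all add: coeff_functionals_linear coeff_iij_monomial)

lemma coeff_ijk_eval_form:
  "c \<in> forms 3 n \<Longrightarrow> i \<noteq> j \<Longrightarrow> i \<noteq> k \<Longrightarrow> j \<noteq> k \<Longrightarrow>
     coeff_ijk i j k (eval_form 3 n c) = c {#i,j,k#}"
  by (rule coeff_by_duality[where L = "coeff_ijk i j k"]) (simp_all add: coeff_functionals_linear coeff_ijk_monomial)

lemma coeff_functional_exists: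
  assumes "size m = 3"
  shows "\<exists>L. \<forall>n c. c \<in> forms 3 n \<longrightarrow> L (eval_form 3 n c) = c m"
proof -
  obtain a b d where m: "m = {#a,b,d#}" using assms size3_mset_cases by blast
  consider "a = b" "b = d" | "a = b" "b \<noteq> d" | "a = d" "a \<noteq> b" | "b = d" "a \<noteq> b"
    | "a \<noteq> b" "a \<noteq> d" "b \<noteq> d"
    by blast
  then show ?thesis
  proof cases
    case 1
    then have "m = {#a,a,a#}" using m by simp
    then show ?thesis using coeff_iii_eval_form by blast
  next
    case 2
    then have "m = {#a,a,d#}" using m by simp
    then show ?thesis using coeff_iij_eval_form 2 by blast
  next
    case 3
    then have "m = {#a,a,b#}" using m by (simp add: add_mset_commute)
    then show ?thesis using coeff_iij_eval_form 3 by blast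
  next
    case 4
    then have "m = {#b,b,a#}" using m by (simp add: add_mset_commute)
    then show ?thesis using coeff_iij_eval_form 4 by (metis (no_types, lifting))
  next
    case 5
    then show ?thesis using m coeff_ijk_eval_form by blast
  qed
qed

lemma eval_form_inj:
  assumes c: "c \<in> forms 3 n" and c': "c' \<in> forms 3 n"
    and eq: "eval_form 3 n c = eval_form 3 n c'"
  shows "c = c'"
proof
  fix m
  show "c m = c' m"
  proof (cases "m \<in> monomials 3 n")
    case False
    then show ?thesis using c c' by (auto simp: forms_def)
  next
    case True
    then have "size m = 3" by (simp add: monomials_def)
    then obtain L where "\<And>n c. c \<in> forms 3 n \<Longrightarrow> L (eval_form 3 n c) = c m"
      using coeff_functional_exists by blast
    then show ?thesis using c c' eq by metis
  qed
qed

lemma eval_form_sum: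
  "eval_form d n (\<lambda>m. \<Sum>w\<in>A. f w m) x = (\<Sum>w\<in>A. eval_form d n (f w) x)"
  unfolding eval_form_def sum_distrib_right by (rule sum.swap)

lemma forms_sum:
  "(\<And>w. w \<in> A \<Longrightarrow> f w \<in> forms d n) \<Longrightarrow> (\<lambda>m. \<Sum>w\<in>A. f w m) \<in> forms d n"
  by (auto simp: forms_def intro!: sum.neutral)

section \<open>The cube of a linear form supported on an interval\<close>

definition cube_form :: "nat \<times> nat \<Rightarrow> (nat \<Rightarrow> complex) \<Rightarrow> nat multiset \<Rightarrow> complex" where
  "cube_form w a m = (\<Sum>p\<in>{fst w..snd w}. \<Sum>q\<in>{fst w..snd w}. \<Sum>r\<in>{fst w..snd w}.
      if {#p,q,r#} = m then a p * a q * a r else 0)"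

lemma cube_form_outside:
  assumes "\<not> set_mset m \<subseteq> {fst w..snd w}"
  shows "cube_form w a m = 0"
  using assms unfolding cube_form_def by (intro sum.neutral ballI) auto

lemma cube_form_forms:
  assumes "snd w < n"
  shows "cube_form w a \<in> forms 3 n"
  unfolding forms_def
proof (intro CollectI allI impI)
  fix m assume "m \<notin> monomials 3 n"
  then have "{#p,q,r#} \<noteq> m" if "p \<in> {fst w..snd w}" "q \<in> {fst w..snd w}" "r \<in> {fst w..snd w}"
    for p q r using assms that by (auto simp: monomials_def)
  then show "cube_form w a m = 0" unfolding cube_form_def by (intro sum.neutral ballI) auto
qed

lemma cube_form_eval:
  assumes "snd w < n"
  shows "eval_form 3 n (cube_form w a) x = (\<Sum>k\<in>{fst w..snd w}. a k * x k) ^ 3"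
proof -
  let ?I = "{fst w..snd w}" and ?M = "monomials 3 n"
  let ?t = "\<lambda>p q r. a p * a q * a r * (x p * x q * x r)"
  have "eval_form 3 n (cube_form w a) x =
      (\<Sum>m\<in>?M. \<Sum>p\<in>?I. \<Sum>q\<in>?I. \<Sum>r\<in>?I. if {#p,q,r#} = m then ?t p q r else 0)"
    unfolding eval_form_def cube_form_def sum_distrib_right by (intro sum.cong refl) auto
  also have "\<dots> = (\<Sum>p\<in>?I. \<Sum>q\<in>?I. \<Sum>r\<in>?I. \<Sum>m\<in>?M. if {#p,q,r#} = m then ?t p q r else 0)"
    by (subst sum.swap, rule sum.cong, rule refl, subst sum.swap, rule sum.cong, rule refl,
        rule sum.swap)
  also have "\<dots> = (\<Sum>p\<in>?I. \<Sum>q\<in>?I. \<Sum>r\<in>?I. ?t p q r)"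
  proof (intro sum.cong refl)
    fix p q r assume "p \<in> ?I" "q \<in> ?I" "r \<in> ?I"
    then have "{#p,q,r#} \<in> ?M" using assms by (auto simp: monomials_def)
    then show "(\<Sum>m\<in>?M. if {#p,q,r#} = m then ?t p q r else 0) = ?t p q r"
      by (simp add: sum.delta finite_monomials)
  qed
  also have "\<dots> = (\<Sum>k\<in>?I. a k * x k) ^ 3"
    by (simp add: power3_eq_cube sum_distrib_left sum_distrib_right algebra_simps)
  finally show ?thesis .
qed

lemma cube_form_scale: "cube_form w (\<lambda>k. c * a k) = (\<lambda>m. c ^ 3 * cube_form w a m)"
  unfolding cube_form_def sum_distrib_left by (intro ext sum.cong refl) (auto simp: power3_eq_cube)

lemma cube_form_cong:
  "(\<And>k. k \<in> {fst w..snd w} \<Longrightarrow> a k = b k) \<Longrightarrow> cube_form w a = cube_form w b"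
  unfolding cube_form_def by (intro ext sum.cong refl) auto

lemma linear_form_at_vec:
  assumes "p \<in> I" "q \<in> I" "r \<in> I" "finite I"
  shows "(\<Sum>k\<in>I. a k * unit_vec p k) = a p"
    and "(\<Sum>k\<in>I. a k * vec2 p q s t k) = s * a p + t * a q"
    and "(\<Sum>k\<in>I. a k * vec3 p q r s t u k) = s * a p + t * a q + u * a r"
proof -
  have unit: "(\<Sum>k\<in>I. a k * unit_vec x k) = a x" if "x \<in> I" for x
    using that assms(4) by (simp add: unit_vec_def if_distrib cong: if_cong)
  then show "(\<Sum>k\<in>I. a k * unit_vec p k) = a p" using assms(1) .
  show "(\<Sum>k\<in>I. a k * vec2 p q s t k) = s * a p + t * a q"
    using unit[OF assms(1)] unit[OF assms(2)]
    by (simp add: vec2_def distrib_left sum.distrib mult.left_commute sum_distrib_left[symmetric])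
  show "(\<Sum>k\<in>I. a k * vec3 p q r s t u k) = s * a p + t * a q + u * a r"
    using unit[OF assms(1)] unit[OF assms(2)] unit[OF assms(3)]
    by (simp add: vec3_def distrib_left sum.distrib mult.left_commute sum_distrib_left[symmetric])
qed

lemma cube_form_coeffs:
  assumes p: "p \<in> {fst w..snd w}" and q: "q \<in> {fst w..snd w}" and r: "r \<in> {fst w..snd w}"
  shows "cube_form w a {#p,p,p#} = a p ^ 3"
    and "p \<noteq> q \<Longrightarrow> cube_form w a {#p,p,q#} = 3 * a p ^ 2 * a q"
    and "p \<noteq> q \<Longrightarrow> p \<noteq> r \<Longrightarrow> q \<noteq> r \<Longrightarrow> cube_form w a {#p,q,r#} = 6 * a p * a q * a r"
proof -
  let ?n = "Suc (snd w)"
  have F: "cube_form w a \<in> forms 3 ?n" by (rule cube_form_forms) simp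
  have E: "eval_form 3 ?n (cube_form w a) = (\<lambda>x. (\<Sum>k\<in>{fst w..snd w}. a k * x k) ^ 3)"
    by (rule ext, rule cube_form_eval) simp
  show "cube_form w a {#p,p,p#} = a p ^ 3"
    using coeff_iii_eval_form[OF F, of p]
    by (simp add: E coeff_iii_def linear_form_at_vec(1)[OF p p p])
  show "p \<noteq> q \<Longrightarrow> cube_form w a {#p,p,q#} = 3 * a p ^ 2 * a q"
    using coeff_iij_eval_form[OF F, of p q]
    by (simp add: E coeff_iij_def linear_form_at_vec(2)[OF p q q] power3_eq_cube power2_eq_square
        algebra_simps)
  show "p \<noteq> q \<Longrightarrow> p \<noteq> r \<Longrightarrow> q \<noteq> r \<Longrightarrow> cube_form w a {#p,q,r#} = 6 * a p * a q * a r"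
    using coeff_ijk_eval_form[OF F, of p q r]
    by (simp add: E coeff_ijk_def linear_form_at_vec(3)[OF p q r] power3_eq_cube algebra_simps)
qed

lemma cube_form_eq_imp_root_of_unity:
  assumes le: "fst w \<le> snd w" and eq: "cube_form w a = cube_form w b"
    and nz: "fst w \<noteq> snd w \<longrightarrow> a (fst w) \<noteq> 0"
  shows "\<exists>\<zeta>::complex. \<zeta> ^ 3 = 1 \<and> (\<forall>k\<in>{fst w..snd w}. b k = \<zeta> * a k)"
proof -
  let ?i = "fst w"
  have i: "?i \<in> {fst w..snd w}" using le by simp
  have cubes: "a ?i ^ 3 = b ?i ^ 3" using cube_form_coeffs(1)[OF i i i] eq by metis
  show ?thesis
  proof (cases "a ?i = 0")
    case True
    then show ?thesis using nz cubes by (intro exI[of _ 1]) auto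
  next
    case False
    have bi: "b ?i \<noteq> 0"
    proof
      assume "b ?i = 0"
      then have "a ?i ^ 3 = 0" using cubes by simp
      then show False using False by simp
    qed
    define \<zeta> where "\<zeta> = b ?i / a ?i"
    have "b k = \<zeta> * a k" if k: "k \<in> {fst w..snd w}" for k
    proof (cases "k = ?i")
      case True then show ?thesis using False by (simp add: \<zeta>_def)
    next
      case ne: False
      have "3 * a ?i ^ 2 * a k = 3 * b ?i ^ 2 * b k"
        using cube_form_coeffs(2)[OF i k k] eq ne by metis
      then have ak: "a ?i ^ 3 * a k = b ?i ^ 2 * a ?i * b k"
        by (simp add: power2_eq_square power3_eq_cube algebra_simps)
      have "b ?i ^ 2 * (b ?i * a k) = b ?i ^ 3 * a k" by (simp add: power2_eq_square power3_eq_cube)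
      also have "\<dots> = b ?i ^ 2 * (a ?i * b k)" using ak cubes by (simp add: algebra_simps)
      finally show ?thesis using False bi by (simp add: \<zeta>_def field_simps)
    qed
    moreover have "\<zeta> ^ 3 = 1" using cubes False bi by (simp add: \<zeta>_def power_divide)
    ultimately show ?thesis by blast
  qed
qed

lemma poly_fun_diff: "poly_fun f \<Longrightarrow> poly_fun g \<Longrightarrow> poly_fun (\<lambda>c. f c - g c)"
  using poly_fun.add[OF _ poly_fun.mult[OF poly_fun.const[of "-1"]]] by fastforce

lemma poly_fun_if: "poly_fun f \<Longrightarrow> poly_fun g \<Longrightarrow> poly_fun (\<lambda>c. if P then f c else g c)"
  by (cases P) simp_all

lemma poly_fun_sum: "(\<And>x. x \<in> A \<Longrightarrow> poly_fun (f x)) \<Longrightarrow> poly_fun (\<lambda>c. \<Sum>x\<in>A. f x c)"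
  by (induction A rule: infinite_finite_induct) (simp_all add: poly_fun.const poly_fun.add)

lemma poly_fun_cube_form:
  "(\<And>k. poly_fun (\<lambda>c. a c k)) \<Longrightarrow> poly_fun (\<lambda>c. cube_form w (a c) m)"
  unfolding cube_form_def by (intro poly_fun_sum poly_fun_if poly_fun.mult poly_fun.const)

section \<open>Recovering the summand of one interval\<close>

definition owns :: "nat \<times> nat \<Rightarrow> nat multiset \<Rightarrow> bool" where
  "owns w m \<longleftrightarrow> size m = 3 \<and> fst w \<in># m \<and> snd w \<in># m \<and> set_mset m \<subseteq> {fst w..snd w}"

text \<open>For i < j, the coefficients of x_i^2 x_j and x_i x_j^2; for the cube of
  a_i x_i + ... + a_j x_j they are 3 a_i^2 a_j and 3 a_i a_j^2.\<close>

definition left_coeff :: "(nat multiset \<Rightarrow> complex) \<Rightarrow> nat \<times> nat \<Rightarrow> complex" where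
  "left_coeff R w = R {#fst w, fst w, snd w#}"

definition right_coeff :: "(nat multiset \<Rightarrow> complex) \<Rightarrow> nat \<times> nat \<Rightarrow> complex" where
  "right_coeff R w = R {#fst w, snd w, snd w#}"

definition nondeg :: "(nat multiset \<Rightarrow> complex) \<Rightarrow> nat \<times> nat \<Rightarrow> bool" where
  "nondeg R w \<longleftrightarrow> (fst w \<noteq> snd w \<longrightarrow> left_coeff R w \<noteq> 0 \<and> right_coeff R w \<noteq> 0)"

text \<open>A vector proportional to the linear form: if the owned coefficients of R are those
  of the cube of a, this is 6 a_i a_j \<cdot> a (the coefficient of x_i x_k x_j is 6 a_i a_k a_j).
  The cube of the form is then summand_num / summand_den, with summand_den = (6 a_i a_j)^3
  = 24 \<cdot> left \<cdot> right.  Both are polynomial in R.\<close>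

definition summand_dir :: "(nat multiset \<Rightarrow> complex) \<Rightarrow> nat \<times> nat \<Rightarrow> nat \<Rightarrow> complex" where
  "summand_dir R w k =
     (if fst w = snd w then unit_vec (fst w) k
      else if k = fst w then 2 * left_coeff R w
      else if k = snd w then 2 * right_coeff R w
      else R {#fst w, k, snd w#})"

definition summand_den :: "(nat multiset \<Rightarrow> complex) \<Rightarrow> nat \<times> nat \<Rightarrow> complex" where
  "summand_den R w = (if fst w = snd w then 1 else 24 * left_coeff R w * right_coeff R w)"

definition summand_num :: "(nat multiset \<Rightarrow> complex) \<Rightarrow> nat \<times> nat \<Rightarrow> nat multiset \<Rightarrow> complex" where
  "summand_num R w m =
     (if fst w = snd w then R {#fst w, fst w, fst w#} * cube_form w (summand_dir R w) m
      else cube_form w (summand_dir R w) m)"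

definition summand :: "(nat multiset \<Rightarrow> complex) \<Rightarrow> nat \<times> nat \<Rightarrow> nat multiset \<Rightarrow> complex" where
  "summand R w m = summand_num R w m / summand_den R w"

definition cbrt :: "complex \<Rightarrow> complex" where
  "cbrt z = (SOME u. u ^ 3 = z)"

lemma cbrt_cube: "cbrt z ^ 3 = z"
proof -
  have "rcis (root 3 (cmod z)) (Arg z / 3) ^ 3 = z"
    by (simp add: DeMoivre2 rcis_cmod_Arg)
  then show ?thesis unfolding cbrt_def by (rule someI)
qed

definition summand_form :: "(nat multiset \<Rightarrow> complex) \<Rightarrow> nat \<times> nat \<Rightarrow> nat \<Rightarrow> complex" where
  "summand_form R w k =
     cbrt (if fst w = snd w then R {#fst w, fst w, fst w#} else 1 / summand_den R w)
     * summand_dir R w k"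

lemma summand_dir_diag: "fst w = snd w \<Longrightarrow> summand_dir R w = unit_vec (fst w)"
  by (simp add: fun_eq_iff summand_dir_def)

lemma cube_summand_form: "cube_form w (summand_form R w) = summand R w"
  unfolding summand_form_def cube_form_scale cbrt_cube summand_def summand_num_def
  by (auto simp: summand_den_def fun_eq_iff)

lemma owns_cases:
  assumes "owns w m" "fst w < snd w"
  obtains "m = {#fst w, fst w, snd w#}" | "m = {#snd w, snd w, fst w#}"
    | k where "fst w < k" "k < snd w" "m = {#fst w, k, snd w#}"
proof -
  let ?i = "fst w" and ?j = "snd w"
  obtain m1 where m1: "m = add_mset ?i m1" using assms(1) by (auto simp: owns_def dest: multi_member_split)
  obtain m2 where m2: "m1 = add_mset ?j m2"
    using assms m1 by (auto simp: owns_def dest: multi_member_split)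
  have "size m2 = 1" using assms(1) m1 m2 by (simp add: owns_def)
  then obtain k where "m2 = {#k#}" using size_1_singleton_mset by blast
  then have km: "m = {#?i, k, ?j#}" using m1 m2 by (simp add: add_mset_commute)
  then have "k \<in> {?i..?j}" using assms(1) by (auto simp: owns_def)
  then consider "k = ?i" | "k = ?j" | "?i < k \<and> k < ?j" by fastforce
  then show ?thesis using km that by cases (auto simp: add_mset_commute)
qed

lemma owns_single: "owns w m \<Longrightarrow> fst w = snd w \<Longrightarrow> m = {#fst w, fst w, fst w#}"
  by (auto simp: owns_def elim!: size3_mset_cases)

lemma summand_owned:
  assumes nd: "nondeg R w" and le: "fst w \<le> snd w" and o: "owns w m"
  shows "summand R w m = R m"
proof (cases "fst w = snd w")
  case True
  then have m: "m = {#fst w, fst w, fst w#}" using owns_single o by blast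
  have "cube_form w (summand_dir R w) m = 1"
    unfolding m using True by (subst cube_form_coeffs(1)) (auto simp: summand_dir_def unit_vec_def)
  then show ?thesis using True m by (simp add: summand_def summand_num_def summand_den_def)
next
  case False
  let ?i = "fst w" and ?j = "snd w" and ?v = "summand_dir R w"
  have lt: "?i < ?j" using False le by simp
  have A: "left_coeff R w \<noteq> 0" and B: "right_coeff R w \<noteq> 0" using nd False by (auto simp: nondeg_def)
  have I: "?i \<in> {?i..?j}" "?j \<in> {?i..?j}" using lt by auto
  have vi: "?v ?i = 2 * left_coeff R w" and vj: "?v ?j = 2 * right_coeff R w"
    using False by (auto simp: summand_dir_def)
  have val: "summand R w m = cube_form w ?v m / (24 * left_coeff R w * right_coeff R w)"
    using False by (simp add: summand_def summand_num_def summand_den_def)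
  from o lt show ?thesis
  proof (cases rule: owns_cases)
    case 1
    have "cube_form w ?v m = 3 * ?v ?i ^ 2 * ?v ?j" unfolding 1 using I lt by (intro cube_form_coeffs) auto
    then show ?thesis using A B 1 unfolding val vi vj by (simp add: left_coeff_def field_simps power2_eq_square)
  next
    case 2
    have "cube_form w ?v m = 3 * ?v ?j ^ 2 * ?v ?i" unfolding 2 using I lt by (intro cube_form_coeffs) auto
    then show ?thesis using A B 2 unfolding val vi vj
      by (simp add: right_coeff_def field_simps power2_eq_square add_mset_commute)
  next
    case (3 k)
    have "cube_form w ?v m = 6 * ?v ?i * ?v k * ?v ?j" unfolding 3(3) using I lt 3
      by (intro cube_form_coeffs) auto
    moreover have "?v k = R m" using 3 by (auto simp: summand_dir_def)
    ultimately show ?thesis using A B unfolding val vi vj by (simp add: field_simps)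
  qed
qed

lemma nondeg_iff_ends:
  assumes le: "fst w \<le> snd w" and own_eq: "\<And>m. owns w m \<Longrightarrow> R m = cube_form w b m"
  shows "nondeg R w \<longleftrightarrow> (fst w \<noteq> snd w \<longrightarrow> b (fst w) \<noteq> 0 \<and> b (snd w) \<noteq> 0)"
proof (cases "fst w = snd w")
  case False
  let ?i = "fst w" and ?j = "snd w"
  have I: "?i \<in> {?i..?j}" "?j \<in> {?i..?j}" using le by auto
  have "owns w {#?i,?i,?j#}" "owns w {#?j,?j,?i#}" using le by (auto simp: owns_def)
  then have "left_coeff R w = 3 * b ?i ^ 2 * b ?j" "right_coeff R w = 3 * b ?j ^ 2 * b ?i"
    using own_eq cube_form_coeffs(2)[OF I(1) I(2) I(2)] cube_form_coeffs(2)[OF I(2) I(1) I(1)] False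
    by (auto simp: left_coeff_def right_coeff_def add_mset_commute)
  then show ?thesis using False by (auto simp: nondeg_def)
qed (simp add: nondeg_def)

lemma summand_of_cube:
  assumes le: "fst w \<le> snd w" and own_eq: "\<And>m. owns w m \<Longrightarrow> R m = cube_form w b m"
    and nz: "fst w \<noteq> snd w \<Longrightarrow> b (fst w) \<noteq> 0 \<and> b (snd w) \<noteq> 0"
  shows "summand R w = cube_form w b"
proof (cases "fst w = snd w")
  case True
  let ?i = "fst w"
  have i: "?i \<in> {fst w..snd w}" using le by simp
  have "owns w {#?i,?i,?i#}" using True by (simp add: owns_def)
  then have Ri: "R {#?i,?i,?i#} = b ?i ^ 3" using own_eq cube_form_coeffs(1)[OF i i i] by simp
  have "cube_form w b = cube_form w (\<lambda>k. b ?i * unit_vec ?i k)"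
    by (rule cube_form_cong) (use True in \<open>auto simp: unit_vec_def\<close>)
  then show ?thesis using True Ri
    by (simp add: fun_eq_iff summand_def summand_num_def summand_den_def cube_form_scale
        summand_dir_diag)
next
  case False
  let ?i = "fst w" and ?j = "snd w" and ?s = "6 * b (fst w) * b (snd w)"
  have I: "?i \<in> {?i..?j}" "?j \<in> {?i..?j}" using le by auto
  have A: "left_coeff R w = 3 * b ?i ^ 2 * b ?j" and B: "right_coeff R w = 3 * b ?j ^ 2 * b ?i"
    using own_eq[of "{#?i,?i,?j#}"] own_eq[of "{#?j,?j,?i#}"] le False
      cube_form_coeffs(2)[OF I(1) I(2) I(2)] cube_form_coeffs(2)[OF I(2) I(1) I(1)]
    by (auto simp: owns_def left_coeff_def right_coeff_def add_mset_commute)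
  have dir: "summand_dir R w k = ?s * b k" if k: "k \<in> {?i..?j}" for k
  proof -
    consider "k = ?i" | "k = ?j" | "?i < k \<and> k < ?j" using k by fastforce
    then show ?thesis
    proof cases
      case 3
      then have "owns w {#?i,k,?j#}" by (auto simp: owns_def)
      moreover have "cube_form w b {#?i,k,?j#} = 6 * b ?i * b k * b ?j"
        using 3 I by (intro cube_form_coeffs) auto
      ultimately show ?thesis using 3 own_eq by (auto simp: summand_dir_def)
    qed (use False A B in \<open>auto simp: summand_dir_def power2_eq_square\<close>)
  qed
  have "summand_den R w = ?s ^ 3" using False A B
    by (simp add: summand_den_def power2_eq_square power3_eq_cube)
  moreover have "?s \<noteq> 0" using nz False by simp
  moreover have "cube_form w (summand_dir R w) = cube_form w (\<lambda>k. ?s * b k)"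
    by (rule cube_form_cong) (rule dir)
  ultimately show ?thesis using False
    by (simp add: fun_eq_iff summand_def summand_num_def cube_form_scale)
qed

section \<open>Peeling off summands by decreasing interval length\<close>

definition peel_order :: "(nat \<times> nat) list \<Rightarrow> bool" where
  "peel_order ws \<longleftrightarrow> distinct ws \<and> (\<forall>w\<in>set ws. fst w \<le> snd w) \<and>
     sorted_wrt (\<lambda>w w'. snd w' - fst w' \<le> snd w - fst w) ws"

lemma peel_order_Cons:
  "peel_order (w # ws) \<Longrightarrow> peel_order ws \<and> w \<notin> set ws \<and> fst w \<le> snd w \<and>
     (\<forall>w'\<in>set ws. snd w' - fst w' \<le> snd w - fst w)"
  by (auto simp: peel_order_def)

text \<open>Monomials owned by the first interval get no contribution from the later (not longer,
  distinct) intervals: such an interval would have to contain the first one.\<close>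

lemma later_summands_vanish:
  assumes ord: "peel_order (w # ws)" and o: "owns w m"
  shows "(\<Sum>w'\<in>set ws. cube_form w' (f w') m) = 0"
proof (rule sum.neutral, rule ballI)
  fix w' assume w': "w' \<in> set ws"
  have "\<not> set_mset m \<subseteq> {fst w'..snd w'}"
  proof
    assume "set_mset m \<subseteq> {fst w'..snd w'}"
    then have "fst w' \<le> fst w" "snd w \<le> snd w'" using o by (auto simp: owns_def)
    moreover have "fst w' \<le> snd w'" "fst w \<le> snd w" "snd w' - fst w' \<le> snd w - fst w"
      using ord w' by (auto simp: peel_order_def)
    ultimately have "fst w' = fst w" "snd w' = snd w" by arith+
    then have "w' = w" by (simp add: prod_eq_iff)
    then show False using peel_order_Cons[OF ord] w' by blast
  qed
  then show "cube_form w' (f w') m = 0" by (rule cube_form_outside)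
qed

primrec peelable :: "(nat multiset \<Rightarrow> complex) \<Rightarrow> (nat \<times> nat) list \<Rightarrow> bool" where
  "peelable R [] = True"
| "peelable R (w # ws) \<longleftrightarrow> nondeg R w \<and> peelable (\<lambda>m. R m - summand R w m) ws"

primrec peel_forms :: "(nat multiset \<Rightarrow> complex) \<Rightarrow> (nat \<times> nat) list \<Rightarrow> nat \<times> nat \<Rightarrow> nat \<Rightarrow> complex" where
  "peel_forms R [] = (\<lambda>w k. 0)"
| "peel_forms R (w # ws) = (peel_forms (\<lambda>m. R m - summand R w m) ws)(w := summand_form R w)"

lemma sum_peel_forms_Cons:
  assumes "peel_order (w # ws)"
  shows "(\<Sum>w'\<in>set (w # ws). cube_form w' (peel_forms R (w # ws) w') m) =
    summand R w m + (\<Sum>w'\<in>set ws. cube_form w' (peel_forms (\<lambda>m. R m - summand R w m) ws w') m)"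
proof -
  have "w \<notin> set ws" using peel_order_Cons[OF assms] by blast
  then show ?thesis by (auto simp: cube_summand_form intro!: sum.cong)
qed

lemma peel_reproduces_owned:
  assumes "peel_order ws" "peelable R ws" "w0 \<in> set ws" "owns w0 m"
  shows "R m = (\<Sum>w\<in>set ws. cube_form w (peel_forms R ws w) m)"
  using assms
proof (induction ws arbitrary: R)
  case (Cons w ws)
  let ?R' = "\<lambda>m. R m - summand R w m"
  note ord = peel_order_Cons[OF Cons.prems(1)]
  show ?case
  proof (cases "w0 = w")
    case True
    then show ?thesis
      using later_summands_vanish[OF Cons.prems(1)] summand_owned[of R w m] Cons.prems ord
      by (simp add: sum_peel_forms_Cons cube_summand_form)
  next
    case False
    then have "?R' m = (\<Sum>w\<in>set ws. cube_form w (peel_forms ?R' ws w) m)"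
      using Cons.IH[of ?R'] Cons.prems ord by auto
    then show ?thesis unfolding sum_peel_forms_Cons[OF Cons.prems(1)] by (simp add: diff_eq_eq)
  qed
qed simp

lemma peel_sum_of_cubes:
  assumes "peel_order ws" and "\<And>m. R m = (\<Sum>w\<in>set ws. cube_form w (b w) m)"
  shows "(peelable R ws \<longleftrightarrow>
           (\<forall>w\<in>set ws. fst w \<noteq> snd w \<longrightarrow> b w (fst w) \<noteq> 0 \<and> b w (snd w) \<noteq> 0)) \<and>
         (peelable R ws \<longrightarrow> (\<forall>w\<in>set ws. cube_form w (peel_forms R ws w) = cube_form w (b w)))"
  using assms
proof (induction ws arbitrary: R)
  case (Cons w ws)
  let ?R' = "\<lambda>m. R m - summand R w m"
  note ord = peel_order_Cons[OF Cons.prems(1)]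
  have own: "R m = cube_form w (b w) m" if "owns w m" for m
    using Cons.prems later_summands_vanish[OF Cons.prems(1) that, of b] ord by simp
  have nd: "nondeg R w \<longleftrightarrow> (fst w \<noteq> snd w \<longrightarrow> b w (fst w) \<noteq> 0 \<and> b w (snd w) \<noteq> 0)"
    using nondeg_iff_ends[of w R "b w"] ord own by blast
  show ?case
  proof (cases "nondeg R w")
    case True
    have summand: "summand R w = cube_form w (b w)"
      using summand_of_cube[of w R "b w"] ord own nd True by blast
    have residual: "?R' m = (\<Sum>w\<in>set ws. cube_form w (b w) m)" for m
      using Cons.prems ord by (simp add: summand)
    have IH: "(peelable ?R' ws \<longleftrightarrow>
           (\<forall>w\<in>set ws. fst w \<noteq> snd w \<longrightarrow> b w (fst w) \<noteq> 0 \<and> b w (snd w) \<noteq> 0)) \<and>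
         (peelable ?R' ws \<longrightarrow> (\<forall>w\<in>set ws. cube_form w (peel_forms ?R' ws w) = cube_form w (b w)))"
      using Cons.IH[OF _ residual] ord by blast
    have "peel_forms R (w # ws) w' = peel_forms ?R' ws w'" if "w' \<in> set ws" for w'
      using that ord by auto
    then show ?thesis using IH True nd by (auto simp: cube_summand_form summand)
  qed (use nd in auto)
qed simp

section \<open>A polynomial certificate for peelability\<close>

text \<open>Clearing the denominator of the residual R - summand R w keeps everything polynomial.\<close>

definition cleared_residual :: "(nat multiset \<Rightarrow> complex) \<Rightarrow> nat \<times> nat \<Rightarrow> nat multiset \<Rightarrow> complex" where
  "cleared_residual S w m = summand_den S w * S m - summand_num S w m"

primrec peel_poly :: "(nat multiset \<Rightarrow> complex) \<Rightarrow> (nat \<times> nat) list \<Rightarrow> complex" where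
  "peel_poly S [] = 1"
| "peel_poly S (w # ws) = (if fst w = snd w then 1 else left_coeff S w * right_coeff S w) *
      peel_poly (cleared_residual S w) ws"

lemma nondeg_scale: "\<delta> \<noteq> 0 \<Longrightarrow> nondeg (\<lambda>m. S m / \<delta>) w \<longleftrightarrow> nondeg S w"
  by (simp add: nondeg_def left_coeff_def right_coeff_def)

lemma residual_scale:
  assumes d: "\<delta> \<noteq> 0" and nd: "nondeg S w"
  shows "summand_den S w \<noteq> 0"
    and "S m / \<delta> - summand (\<lambda>m. S m / \<delta>) w m = cleared_residual S w m / (summand_den S w * \<delta>)"
proof -
  show dn: "summand_den S w \<noteq> 0" using nd by (auto simp: summand_den_def nondeg_def)
  have "summand (\<lambda>m. S m / \<delta>) w m = summand_num S w m / (summand_den S w * \<delta>)"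
  proof (cases "fst w = snd w")
    case True then show ?thesis
      by (simp add: summand_def summand_num_def summand_den_def summand_dir_diag)
  next
    case False
    have "summand_dir (\<lambda>m. S m / \<delta>) w = (\<lambda>k. inverse \<delta> * summand_dir S w k)" using False
      by (auto simp: fun_eq_iff summand_dir_def left_coeff_def right_coeff_def field_simps)
    then have "summand_num (\<lambda>m. S m / \<delta>) w m = summand_num S w m / \<delta> ^ 3"
      using False by (simp add: summand_num_def cube_form_scale power_inverse divide_inverse)
    moreover have "summand_den (\<lambda>m. S m / \<delta>) w = summand_den S w / \<delta> ^ 2"
      using False by (simp add: summand_den_def left_coeff_def right_coeff_def power2_eq_square)
    ultimately have "summand (\<lambda>m. S m / \<delta>) w m =
        (summand_num S w m / \<delta> ^ 3) / (summand_den S w / \<delta> ^ 2)"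
      by (simp add: summand_def)
    also have "\<dots> = summand_num S w m / (summand_den S w * \<delta>)"
      using d dn by (simp add: power2_eq_square power3_eq_cube field_simps)
    finally show ?thesis .
  qed
  then show "S m / \<delta> - summand (\<lambda>m. S m / \<delta>) w m = cleared_residual S w m / (summand_den S w * \<delta>)"
    using d dn by (simp add: cleared_residual_def field_simps)
qed

lemma peel_poly_nonzero_iff:
  "\<delta> \<noteq> 0 \<Longrightarrow> peel_poly S ws \<noteq> 0 \<longleftrightarrow> peelable (\<lambda>m. S m / \<delta>) ws"
proof (induction ws arbitrary: S \<delta>)
  case (Cons w ws)
  show ?case
  proof (cases "nondeg S w")
    case True
    note res = residual_scale[OF Cons.prems True]
    have "peel_poly S (w # ws) \<noteq> 0 \<longleftrightarrow> peel_poly (cleared_residual S w) ws \<noteq> 0"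
      using True by (auto simp: nondeg_def)
    also have "\<dots> \<longleftrightarrow> peelable (\<lambda>m. cleared_residual S w m / (summand_den S w * \<delta>)) ws"
      using Cons.IH[of "summand_den S w * \<delta>"] res(1) Cons.prems by simp
    also have "\<dots> \<longleftrightarrow> peelable (\<lambda>m. S m / \<delta>) (w # ws)"
      using True Cons.prems by (simp add: nondeg_scale res(2))
    finally show ?thesis .
  next
    case False
    then have "\<not> nondeg (\<lambda>m. S m / \<delta>) w" using nondeg_scale Cons.prems by blast
    then show ?thesis using False by (auto simp: nondeg_def)
  qed
qed simp

lemma poly_fun_peel_poly:
  "(\<And>m. poly_fun (\<lambda>c. S c m)) \<Longrightarrow> poly_fun (\<lambda>c. peel_poly (S c) ws)"
proof (induction ws arbitrary: S)
  case (Cons w ws)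
  have dir: "poly_fun (\<lambda>c. summand_dir (S c) w k)" for k
    unfolding summand_dir_def left_coeff_def right_coeff_def
    by (intro poly_fun_if poly_fun.mult poly_fun.const Cons.prems)
  have "poly_fun (\<lambda>c. peel_poly (cleared_residual (S c) w) ws)"
    by (rule Cons.IH) (unfold cleared_residual_def summand_den_def summand_num_def
        left_coeff_def right_coeff_def,
        intro poly_fun_diff poly_fun_if poly_fun.mult poly_fun.const Cons.prems
        poly_fun_cube_form dir)
  moreover have "poly_fun (\<lambda>c. if fst w = snd w then 1 else left_coeff (S c) w * right_coeff (S c) w)"
    unfolding left_coeff_def right_coeff_def
    by (intro poly_fun_if poly_fun.mult poly_fun.const Cons.prems)
  ultimately show ?case by (simp add: poly_fun.mult)
qed (simp add: poly_fun.const)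

lemma peelable_poly_certificate:
  "\<exists>q. poly_fun q \<and> (\<forall>c. q c \<noteq> 0 \<longleftrightarrow> peelable c ws)"
  using poly_fun_peel_poly[of "\<lambda>c. c" ws] peel_poly_nonzero_iff[of 1 _ ws]
  by (intro exI[of _ "\<lambda>c. peel_poly c ws"]) (simp add: poly_fun.var)

definition intervals :: "nat \<Rightarrow> (nat \<times> nat) set" where
  "intervals n = {(i,j). i \<le> j \<and> j < n}"

definition interval_list :: "nat \<Rightarrow> (nat \<times> nat) list" where
  "interval_list n = sort_key (\<lambda>w. n - (snd w - fst w)) (sorted_list_of_set (intervals n))"

definition interval_sum :: "nat \<Rightarrow> (nat \<times> nat \<Rightarrow> nat \<Rightarrow> complex) \<Rightarrow> nat multiset \<Rightarrow> complex" where
  "interval_sum n t m = (\<Sum>w\<in>intervals n. cube_form w (t w) m)"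

lemma finite_intervals: "finite (intervals n)"
  by (rule finite_subset[of _ "{..<n} \<times> {..<n}"]) (auto simp: intervals_def)

lemma set_interval_list: "set (interval_list n) = intervals n"
  using finite_intervals by (simp add: interval_list_def)

lemma peel_order_interval_list: "peel_order (interval_list n)"
proof -
  have "sorted_wrt (\<lambda>x y. n - (snd x - fst x) \<le> n - (snd y - fst y)) (interval_list n)"
    unfolding interval_list_def by (rule sorted_map[THEN iffD1, OF sorted_sort_key])
  then have "sorted_wrt (\<lambda>w w'. snd w' - fst w' \<le> snd w - fst w) (interval_list n)"
    by (rule sorted_wrt_mono_rel[rotated]) (auto simp: set_interval_list intervals_def)
  moreover have "distinct (interval_list n)" using finite_intervals by (simp add: interval_list_def)
  ultimately show ?thesis
    unfolding peel_order_def by (auto simp: set_interval_list intervals_def)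
qed

lemma interval_sum_forms: "interval_sum n t \<in> forms 3 n"
  unfolding interval_sum_def[abs_def]
  by (rule forms_sum) (auto intro: cube_form_forms simp: intervals_def)

lemma interval_cubic_rep_iff:
  assumes "c \<in> forms 3 n"
  shows "interval_cubic_rep n c t \<longleftrightarrow> c = interval_sum n t"
proof -
  have "eval_form 3 n (interval_sum n t) x = (\<Sum>(i,j)\<in>intervals n. (\<Sum>k=i..j. t (i,j) k * x k) ^ 3)"
    for x unfolding interval_sum_def[abs_def] eval_form_sum
    by (intro sum.cong refl) (auto simp: cube_form_eval intervals_def)
  then have "interval_cubic_rep n c t \<longleftrightarrow> eval_form 3 n c = eval_form 3 n (interval_sum n t)"
    by (simp add: interval_cubic_rep_def intervals_def fun_eq_iff)
  also have "\<dots> \<longleftrightarrow> c = interval_sum n t"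
    using eval_form_inj[OF assms interval_sum_forms] by blast
  finally show ?thesis .
qed

lemma monomial_owned:
  assumes "m \<in> monomials 3 n"
  shows "\<exists>w\<in>intervals n. owns w m"
proof -
  have ne: "set_mset m \<noteq> {}" and sub: "set_mset m \<subseteq> {..<n}" using assms by (auto simp: monomials_def)
  let ?w = "(Min (set_mset m), Max (set_mset m))"
  have "owns ?w m" using assms ne by (auto simp: owns_def monomials_def)
  moreover have "?w \<in> intervals n" using ne sub by (auto simp: intervals_def)
  ultimately show ?thesis by blast
qed

lemma peel_gives_rep:
  assumes c: "c \<in> forms 3 n" and p: "peelable c (interval_list n)"
  shows "interval_cubic_rep n c (peel_forms c (interval_list n))"
proof -
  have "c m = interval_sum n (peel_forms c (interval_list n)) m" for m
  proof (cases "m \<in> monomials 3 n")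
    case True
    then show ?thesis
      using monomial_owned peel_reproduces_owned[OF peel_order_interval_list p]
      by (fastforce simp: interval_sum_def set_interval_list)
  qed (use c interval_sum_forms in \<open>auto simp: forms_def\<close>)
  then show ?thesis using c by (simp add: interval_cubic_rep_iff fun_eq_iff)
qed

lemma peel_rep_unique:
  assumes c: "c \<in> forms 3 n" and p: "peelable c (interval_list n)"
    and t: "interval_cubic_rep n c t" and t': "interval_cubic_rep n c t'"
  shows "same_rep n t t'"
  unfolding same_rep_def
proof (intro allI impI)
  fix i j assume ij: "i \<le> j \<and> j < n"
  let ?ws = "interval_list n" and ?w = "(i,j)"
  have sum: "c m = (\<Sum>w\<in>set ?ws. cube_form w (u w) m)" if "interval_cubic_rep n c u" for u m
    using that c by (simp add: interval_cubic_rep_iff interval_sum_def set_interval_list)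
  have w: "?w \<in> set ?ws" using ij by (simp add: set_interval_list intervals_def)
  note recover = peel_sum_of_cubes[OF peel_order_interval_list sum]
  have "cube_form ?w (t ?w) = cube_form ?w (t' ?w)" and "i \<noteq> j \<longrightarrow> t ?w i \<noteq> 0"
    using recover[OF t] recover[OF t'] p w by auto
  then show "\<exists>\<zeta>::complex. \<zeta> ^ 3 = 1 \<and> (\<forall>k\<in>{i..j}. t' (i,j) k = \<zeta> * t (i,j) k)"
    using cube_form_eq_imp_root_of_unity[of ?w "t ?w" "t' ?w"] ij by simp
qed

text \<open>The sum of all cubes (x_i + ... + x_j)^3 is peelable, so peelability is generic.\<close>

lemma all_ones_peelable: "peelable (interval_sum n (\<lambda>w k. 1)) (interval_list n)"
  using peel_sum_of_cubes[OF peel_order_interval_list, of "interval_sum n (\<lambda>w k. 1)" "\<lambda>w k. 1"]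
  by (simp add: interval_sum_def set_interval_list)

theorem theorem1p4:
  fixes n :: nat
  assumes "n \<ge> 1"
  shows "general_form 3 n (\<lambda>c. (\<exists>t. interval_cubic_rep n c t) \<and>
           (\<forall>t t'. interval_cubic_rep n c t \<longrightarrow> interval_cubic_rep n c t' \<longrightarrow> same_rep n t t'))"
proof -
  obtain q where q: "poly_fun q" "\<And>c. q c \<noteq> 0 \<longleftrightarrow> peelable c (interval_list n)"
    using peelable_poly_certificate by blast
  have "q (interval_sum n (\<lambda>w k. 1)) \<noteq> 0" using q(2) all_ones_peelable by blast
  then show ?thesis
    unfolding general_form_def
    using q interval_sum_forms peel_gives_rep peel_rep_unique by blast
qed

end
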